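(* Let $t\ge1$ and let $\mathcal{C}_0\subseteq S^\ell$ be a code of length $\ell$ over a set $S$ of size $s$, with dual distance $t+2\le\ell$ and no repeated codewords. Let $\mathcal{T}_{\mathcal{C}_0}=(X,\mathcal{B},\mathcal{G})$ be its associated design and $q$ a prime power. Then the query distribution $\mathcal{Q}$ on $\mathcal{T}_{\mathcal{C}_0}$ (defined in the context) is $t$-private: for every $T\subseteq[1,\ell]$ with $|T|\le t$ and all $i,i'\in X$, the tuples $(\mathcal{Q}(i)_j)_{j\in T}$ and $(\mathcal{Q}(i')_j)_{j\in T}$ have the same distribution; and for every $u\in\mathrm{IC}_q(\mathcal{C}_0)$ and every outcome, $u_i=-\sum_{j\ne j^*(i)}u_{\mathcal{Q}(i)_j}$.
   Context: $\mathcal{T}_{\mathcal{C}_0}$: points $X=S\times[1,\ell]$, groups $G_j=S\times\{j\}$ ($1\le j\le\ell$), blocks $B_c=\{(c_j,j):1\le j\le\ell\}$ for $c\in\mathcal{C}_0$. $\mathrm{IC}_q(\mathcal{C}_0)=\{u\in\mathbb{F}_q^X:\sum_{x\in B_c}u_x=0\ \forall c\in\mathcal{C}_0\}$. Dual distance (Delsarte): with $A_i=\frac{1}{|\mathcal{C}_0|}\#\{(c,c')\in\mathcal{C}_0^2:d(c,c')=i\}$ and $B_k=\frac{1}{|\mathcal{C}_0|}\sum_{i=0}^\ell A_iK_k(i)$, where $K_k(i)=\sum_{j}(-1)^j(s-1)^{k-j}\binom{i}{j}\binom{\ell-i}{k-j}$, the dual distance is the least $k\ge1$ with $B_k\ne0$;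 for a linear code it equals the minimum distance of the dual code. Query distribution: for $i\in X$ let $j^*=j^*(i)$ be the index with $i\in G_{j^*}$, $\mathcal{B}_i$ the set of blocks containing $i$; choose $B$ uniformly in $\mathcal{B}_i$ and independently $\mathcal{Q}(i)_{j^*}$ uniformly in $G_{j^*}$; for $j\ne j^*$, $\mathcal{Q}(i)_j$ is the unique element of $B\cap G_j$. *)

theory Defs
  imports "HOL-Probability.Probability"
begin

text \<open>Codewords of length l over S are functions on the index set {1..l},
  extensional (value undefined outside {1..l}): elements of PiE {1..l} (\<lambda>_. S).\<close>

definition hamming :: "nat \<Rightarrow> (nat \<Rightarrow> 'a) \<Rightarrow> (nat \<Rightarrow> 'a) \<Rightarrow> nat" where
  "hamming l c c' = card {j \<in> {1..l}. c j \<noteq> c' j}"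

definition krawtchouk :: "nat \<Rightarrow> nat \<Rightarrow> nat \<Rightarrow> nat \<Rightarrow> real" where
  "krawtchouk s l k i =
     (\<Sum>j = 0..k. (-1) ^ j * (real s - 1) ^ (k - j) * real (i choose j) * real ((l - i) choose (k - j)))"

definition dist_distrib :: "nat \<Rightarrow> (nat \<Rightarrow> 'a) set \<Rightarrow> nat \<Rightarrow> real" where
  "dist_distrib l C i = card {(c, c'). c \<in> C \<and> c' \<in> C \<and> hamming l c c' = i} / real (card C)"

definition dual_distrib :: "nat \<Rightarrow> nat \<Rightarrow> (nat \<Rightarrow> 'a) set \<Rightarrow> nat \<Rightarrow> real" where
  "dual_distrib s l C k = (\<Sum>i = 0..l. dist_distrib l C i * krawtchouk s l k i) / real (card C)"

definition has_dual_distance :: "nat \<Rightarrow> nat \<Rightarrow> (nat \<Rightarrow> 'a) set \<Rightarrow> nat \<Rightarrow> bool" where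
  "has_dual_distance s l C d \<longleftrightarrow>
     1 \<le> d \<and> dual_distrib s l C d \<noteq> 0 \<and> (\<forall>k. 1 \<le> k \<and> k < d \<longrightarrow> dual_distrib s l C k = 0)"

definition points :: "'a set \<Rightarrow> nat \<Rightarrow> ('a \<times> nat) set" where
  "points S l = S \<times> {1..l}"

definition block :: "nat \<Rightarrow> (nat \<Rightarrow> 'a) \<Rightarrow> ('a \<times> nat) set" where
  "block l c = {(c j, j) | j. j \<in> {1..l}}"

definition IC :: "(nat \<Rightarrow> 'a) set \<Rightarrow> nat \<Rightarrow> 'a set \<Rightarrow> ('a \<times> nat \<Rightarrow> 'f::field) set" where
  "IC C l S = {u. u \<in> points S l \<rightarrow>\<^sub>E UNIV \<and> (\<forall>c \<in> C. (\<Sum>x \<in> block l c. u x) = 0)}"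

text \<open>Blocks containing point i, indexed by their codewords (no repeated codewords).\<close>
definition blocks_through :: "(nat \<Rightarrow> 'a) set \<Rightarrow> nat \<Rightarrow> 'a \<times> nat \<Rightarrow> (nat \<Rightarrow> 'a) set" where
  "blocks_through C l i = {c \<in> C. (fst i, snd i) \<in> block l c}"

text \<open>Query distribution Q(i): a tuple indexed by j in [1,l], with Q(i)_j \<in> G_j.
  Here j* = snd i.\<close>
definition query :: "'a set \<Rightarrow> (nat \<Rightarrow> 'a) set \<Rightarrow> nat \<Rightarrow> 'a \<times> nat \<Rightarrow> (nat \<Rightarrow> 'a \<times> nat) pmf" where
  "query S C l i =
     map_pmf (\<lambda>(c, y). (\<lambda>j. if j = snd i then (y, j)
                             else if j \<in> {1..l} then (c j, j) else undefined))
       (pair_pmf (pmf_of_set (blocks_through C l i)) (pmf_of_set S))"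

end

theory Submission
  imports Defs
begin

text \<open>
  A query for the point \<open>i = (a, j)\<close> is the block of a uniformly random codeword \<open>c\<close> with
  \<open>c j = a\<close>, its \<open>j\<close>-th entry replaced by a fresh uniform symbol, so the parity check of that
  block recovers \<open>u i\<close> from the other entries.

  For privacy, dual distance \<open>t + 2\<close> makes \<open>C0\<close> an orthogonal array of strength \<open>t + 1\<close>
  (Delsarte): on any set \<open>T\<close> of at most \<open>t + 1\<close> coordinates every pattern is carried by exactly
  \<open>|C0| / s^|T|\<close> codewords. Indeed, if \<open>N T\<close> counts the pairs of codewords agreeing on \<open>T\<close>
  and \<open>|T| = m\<close>, then \<open>s^m N T - |C0|^2\<close> is \<open>s^m\<close> times the variance of the pattern counts,
  hence nonnegative; summed over all \<open>T\<close> of size \<open>m\<close> it equals the sum over pairs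
  \<open>(c, c')\<close> of \<open>s^m (l - d(c, c') choose m)\<close> minus \<open>(l choose m) |C0|^2\<close>, which vanishes because
  \<open>s^m (l - i choose m) = \<Sum>k\<le>m. (l - k choose m - k) K_k(i)\<close> and \<open>B_1 = \<dots> = B_m = 0\<close>.
  Conditioning on \<open>c j = a\<close> uses up one coordinate, so the restriction of a query to at most
  \<open>t\<close> coordinates is uniform on the product of the groups, whatever the point.
\<close>

section \<open>Krawtchouk polynomials and the dual distance distribution\<close>

lemma alternating_choose_convolution:
  "(\<Sum>j=0..M. (-1)^j * real (i choose j) * real ((i + p - j) choose (M - j))) = real (p choose M)"
proof (induction i arbitrary: p M)
  case 0
  have "(\<Sum>j=0..M. (-1)^j * real (0 choose j) * real ((0 + p - j) choose (M - j)))
      = (\<Sum>j\<in>{0}. (-1)^j * real (0 choose j) * real ((0 + p - j) choose (M - j)))"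
    by (rule sum.mono_neutral_right) auto
  then show ?case by simp
next
  case (Suc i)
  show ?case
  proof (cases M)
    case 0
    then show ?thesis by simp
  next
    case (Suc M')
    have pascal: "real (Suc i choose j) = real (i choose j) + (if j = 0 then 0 else real (i choose (j - 1)))" for j
      by (cases j) auto
    have "(\<Sum>j=0..M. (-1)^j * real (Suc i choose j) * real ((Suc i + p - j) choose (M - j)))
      = (\<Sum>j=0..M. (-1)^j * real (i choose j) * real ((i + Suc p - j) choose (M - j)))
       + (\<Sum>j=0..M. if j = 0 then 0 else (-1)^j * real (i choose (j - 1)) * real ((Suc i + p - j) choose (M - j)))"
      unfolding sum.distrib[symmetric] by (intro sum.cong refl) (simp add: pascal algebra_simps)
    also have "(\<Sum>j=0..M. if j = 0 then 0 else (-1)^j * real (i choose (j - 1)) * real ((Suc i + p - j) choose (M - j)))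
       = (\<Sum>j=Suc 0..Suc M'. (-1)^j * real (i choose (j - 1)) * real ((Suc i + p - j) choose (M - j)))"
      using Suc by (simp add: sum.atLeast_Suc_atMost)
    also have "\<dots> = (\<Sum>j=0..M'. (-1)^(Suc j) * real (i choose j) * real ((i + p - j) choose (M' - j)))"
      unfolding Suc sum.shift_bounds_cl_Suc_ivl by simp
    also have "\<dots> = - real (p choose M')"
      using Suc.IH[of p M'] by (simp add: sum_negf)
    finally show ?thesis using Suc.IH[of "Suc p" M] Suc by simp
  qed
qed

lemma sum_triangle_swap:
  fixes F :: "nat \<Rightarrow> nat \<Rightarrow> 'b::comm_monoid_add"
  shows "(\<Sum>k=0..m. \<Sum>j=0..k. F j (k - j)) = (\<Sum>r=0..m. \<Sum>j=0..m-r. F j r)"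
proof -
  have "(\<Sum>k=0..m. \<Sum>j=0..k. F j (k - j)) = (\<Sum>(j,r)\<in>{(j,r). j + r \<le> m}. F j r)"
    using sum.triangle_reindex_eq[of F m] by (simp add: atMost_atLeast0)
  also have "\<dots> = (\<Sum>(r,j)\<in>(SIGMA r:{0..m}. {0..m-r}). F j r)"
    by (rule sum.reindex_bij_witness[where j="\<lambda>(j,r). (r,j)" and i="\<lambda>(r,j). (j,r)"]) auto
  also have "\<dots> = (\<Sum>r=0..m. \<Sum>j=0..m-r. F j r)"
    by (subst sum.Sigma) auto
  finally show ?thesis .
qed

lemma choose_mult_real:
  assumes "r \<le> m"
  shows "real (n choose r) * real ((n - r) choose (m - r)) = real (n choose m) * real (m choose r)"
proof (cases "m \<le> n")
  case True
  then have "(n choose m) * (m choose r) = (n choose r) * ((n - r) choose (m - r))"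
    using assms by (intro choose_mult)
  then show ?thesis by (metis of_nat_mult)
next
  case False
  then have "n < r \<or> n - r < m - r" using assms by auto
  then have "real (n choose r) * real ((n - r) choose (m - r)) = 0" by (auto simp: binomial_eq_0)
  then show ?thesis using False by (simp add: binomial_eq_0)
qed

text \<open>Expanding \<open>K_k\<close> and exchanging summations, the inner alternating sum collapses; what
  remains is the binomial expansion of \<open>((s - 1) + 1) ^ m\<close>.\<close>
lemma krawtchouk_binomial_expansion:
  assumes "i \<le> l"
  shows "real s ^ m * real ((l - i) choose m)
       = (\<Sum>k=0..m. real ((l - k) choose (m - k)) * krawtchouk s l k i)"
proof -
  define n where "n = l - i"
  have l: "l = i + n" using assms n_def by simp
  define F where "F j r = real ((l - (j + r)) choose (m - (j + r)))
      * ((-1) ^ j * (real s - 1) ^ r * real (i choose j) * real (n choose r))" for j r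
  have inner: "(\<Sum>j=0..m-r. F j r) = (real s - 1) ^ r * real (n choose r) * real ((n - r) choose (m - r))"
    if "r \<le> m" for r
  proof (cases "r \<le> n")
    case True
    have "(\<Sum>j=0..m-r. F j r) = (real s - 1) ^ r * real (n choose r) *
        (\<Sum>j=0..m-r. (-1)^j * real (i choose j) * real ((i + (n - r) - j) choose ((m - r) - j)))"
      unfolding F_def l sum_distrib_left
      by (rule sum.cong[OF refl]) (use True that in \<open>auto simp: algebra_simps diff_diff_add\<close>)
    also have "\<dots> = (real s - 1) ^ r * real (n choose r) * real ((n - r) choose (m - r))"
      by (simp only: alternating_choose_convolution)
    finally show ?thesis .
  qed (simp add: F_def binomial_eq_0)
  have "(\<Sum>k=0..m. real ((l - k) choose (m - k)) * krawtchouk s l k i) = (\<Sum>k=0..m. \<Sum>j=0..k. F j (k - j))"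
    unfolding krawtchouk_def F_def n_def by (auto simp: sum_distrib_left intro!: sum.cong)
  also have "\<dots> = (\<Sum>r=0..m. \<Sum>j=0..m-r. F j r)" by (rule sum_triangle_swap)
  also have "\<dots> = (\<Sum>r=0..m. real (n choose m) * (real (m choose r) * (real s - 1) ^ r * 1 ^ (m - r)))"
    by (rule sum.cong[OF refl]) (simp add: inner choose_mult_real)
  also have "\<dots> = real (n choose m) * real s ^ m"
    using binomial_ring[of "real s - 1" 1 m] by (simp add: sum_distrib_left atMost_atLeast0)
  finally show ?thesis by (simp add: n_def)
qed

lemma krawtchouk_0 [simp]: "krawtchouk s l 0 i = 1"
  unfolding krawtchouk_def by simp

lemma hamming_le: "hamming l c c' \<le> l"
proof -
  have "hamming l c c' \<le> card {1..l}"
    unfolding hamming_def by (rule card_mono) auto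
  then show ?thesis by simp
qed

lemma dual_distrib_eq_sum_pairs:
  assumes "finite C"
  shows "dual_distrib s l C k * real (card C) ^ 2
       = (\<Sum>p\<in>C \<times> C. krawtchouk s l k (hamming l (fst p) (snd p)))"
proof (cases "C = {}")
  case False
  then have "real (card C) > 0" using assms by (simp add: card_gt_0_iff)
  moreover have "{(c, c'). c \<in> C \<and> c' \<in> C \<and> hamming l c c' = i} = {p\<in>C \<times> C. hamming l (fst p) (snd p) = i}" for i
    by auto
  ultimately have "dual_distrib s l C k * real (card C) ^ 2
      = (\<Sum>i=0..l. real (card {p\<in>C \<times> C. hamming l (fst p) (snd p) = i}) * krawtchouk s l k i)"
    unfolding dual_distrib_def dist_distrib_def
    by (simp add: power2_eq_square sum_divide_distrib[symmetric] field_simps)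
  also have "\<dots> = (\<Sum>p\<in>C \<times> C. krawtchouk s l k (hamming l (fst p) (snd p)))"
    using sum.group[of "C \<times> C" "{0..l}" "\<lambda>p. hamming l (fst p) (snd p)" "\<lambda>p. krawtchouk s l k (hamming l (fst p) (snd p))"]
    using assms by (simp add: hamming_le image_subset_iff)
  finally show ?thesis .
qed simp

lemma sum_pairs_choose_agreement:
  assumes "finite C" "\<forall>k. 1 \<le> k \<and> k \<le> m \<longrightarrow> dual_distrib s l C k = 0"
  shows "(\<Sum>p\<in>C \<times> C. real s ^ m * real ((l - hamming l (fst p) (snd p)) choose m))
       = real (l choose m) * real (card C) ^ 2"
proof -
  let ?d = "\<lambda>p. hamming l (fst p) (snd p)"
  have "(\<Sum>p\<in>C \<times> C. real s ^ m * real ((l - ?d p) choose m))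
      = (\<Sum>k=0..m. real ((l - k) choose (m - k)) * (\<Sum>p\<in>C \<times> C. krawtchouk s l k (?d p)))"
    by (simp add: krawtchouk_binomial_expansion hamming_le sum_distrib_left sum.swap[of _ "C \<times> C"])
  also have "\<dots> = (\<Sum>k=0..m. real ((l - k) choose (m - k)) * (dual_distrib s l C k * real (card C) ^ 2))"
    by (simp add: dual_distrib_eq_sum_pairs assms(1))
  also have "\<dots> = real (l choose m) * (dual_distrib s l C 0 * real (card C) ^ 2)"
    using assms(2) by (simp add: sum.atLeast_Suc_atMost)
  also have "dual_distrib s l C 0 * real (card C) ^ 2 = real (card C) ^ 2"
    using dual_distrib_eq_sum_pairs[OF assms(1), of s l 0]
    by (simp add: card_cartesian_product power2_eq_square)
  finally show ?thesis .
qed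

section \<open>Orthogonal arrays from dual distance\<close>

definition codewords_matching :: "(nat \<Rightarrow> 'a) set \<Rightarrow> nat set \<Rightarrow> (nat \<Rightarrow> 'a) \<Rightarrow> (nat \<Rightarrow> 'a) set" where
  "codewords_matching C T z = {c \<in> C. \<forall>j\<in>T. c j = z j}"

definition agreeing_pairs :: "(nat \<Rightarrow> 'a) set \<Rightarrow> nat set \<Rightarrow> ((nat \<Rightarrow> 'a) \<times> (nat \<Rightarrow> 'a)) set" where
  "agreeing_pairs C T = {p \<in> C \<times> C. \<forall>j\<in>T. fst p j = snd p j}"

definition orthogonal_array :: "'a set \<Rightarrow> nat \<Rightarrow> nat \<Rightarrow> (nat \<Rightarrow> 'a) set \<Rightarrow> bool" where
  "orthogonal_array S l m C \<longleftrightarrow>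
     (\<forall>T z. T \<subseteq> {1..l} \<and> card T \<le> m \<and> (\<forall>j\<in>T. z j \<in> S) \<longrightarrow>
        card (codewords_matching C T z) * card S ^ card T = card C)"

lemma codewords_matching_restrict [simp]:
  "codewords_matching C T (restrict z T) = codewords_matching C T z"
  by (simp add: codewords_matching_def)

lemma codewords_matching_eq_fibre:
  "z \<in> extensional T \<Longrightarrow> codewords_matching C T z = {c \<in> C. restrict c T = z}"
  by (auto simp: codewords_matching_def extensional_def restrict_def fun_eq_iff)

lemma restrict_codeword_in_PiE:
  assumes "C \<subseteq> PiE {1..l} (\<lambda>_. S)" "c \<in> C" "T \<subseteq> {1..l}"
  shows "restrict c T \<in> PiE T (\<lambda>_. S)"
  using assms by (fastforce simp: PiE_iff)

lemma
  assumes "finite S" "C \<subseteq> PiE {1..l} (\<lambda>_. S)" "T \<subseteq> {1..l}"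
  shows sum_card_codewords_matching:
      "(\<Sum>z\<in>PiE T (\<lambda>_. S). card (codewords_matching C T z)) = card C"
    and card_agreeing_pairs:
      "card (agreeing_pairs C T) = (\<Sum>z\<in>PiE T (\<lambda>_. S). card (codewords_matching C T z) ^ 2)"
proof -
  have fin: "finite C" "finite (PiE T (\<lambda>_. S))"
    using assms by (auto intro: finite_subset[OF _ finite_PiE] finite_PiE dest: finite_subset)
  have maps: "(\<lambda>c. restrict c T) ` C \<subseteq> PiE T (\<lambda>_. S)"
    using restrict_codeword_in_PiE[OF assms(2) _ assms(3)] by blast
  show "(\<Sum>z\<in>PiE T (\<lambda>_. S). card (codewords_matching C T z)) = card C"
    using sum.group[OF fin maps, of "\<lambda>_. 1::nat"] by (simp add: codewords_matching_eq_fibre PiE_iff)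
  have "{p \<in> agreeing_pairs C T. restrict (fst p) T = z}
      = codewords_matching C T z \<times> codewords_matching C T z" if "z \<in> PiE T (\<lambda>_. S)" for z
    using that by (auto simp: agreeing_pairs_def codewords_matching_eq_fibre PiE_iff restrict_def fun_eq_iff)
  moreover have "finite (agreeing_pairs C T)"
    using fin by (simp add: agreeing_pairs_def)
  moreover have "(\<lambda>p. restrict (fst p) T) ` agreeing_pairs C T \<subseteq> PiE T (\<lambda>_. S)"
    using maps by (auto simp: agreeing_pairs_def image_subset_iff)
  ultimately show "card (agreeing_pairs C T) = (\<Sum>z\<in>PiE T (\<lambda>_. S). card (codewords_matching C T z) ^ 2)"
    using sum.group[OF _ fin(2), of "agreeing_pairs C T" "\<lambda>p. restrict (fst p) T" "\<lambda>_. 1::nat"]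
    by (simp add: card_cartesian_product power2_eq_square)
qed

lemma card_mult_sum_squares_eq:
  fixes n :: "'b \<Rightarrow> real"
  assumes "finite Z"
  shows "real (card Z) * (\<Sum>z\<in>Z. n z ^ 2) - (\<Sum>z\<in>Z. n z) ^ 2
       = real (card Z) * (\<Sum>z\<in>Z. (n z - (\<Sum>z\<in>Z. n z) / real (card Z)) ^ 2)"
proof (cases "Z = {}")
  case False
  define \<mu> where "\<mu> = (\<Sum>z\<in>Z. n z) / real (card Z)"
  have card: "real (card Z) > 0" using assms False by (simp add: card_gt_0_iff)
  have "(\<Sum>z\<in>Z. (n z - \<mu>) ^ 2) = (\<Sum>z\<in>Z. n z ^ 2 - 2 * \<mu> * n z + \<mu> ^ 2)"
    by (intro sum.cong refl) (simp add: power2_diff)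
  also have "\<dots> = (\<Sum>z\<in>Z. n z ^ 2) - 2 * \<mu> * (\<Sum>z\<in>Z. n z) + real (card Z) * \<mu> ^ 2"
    by (simp add: sum.distrib sum_subtractf sum_distrib_left)
  finally have "real (card Z) * (\<Sum>z\<in>Z. (n z - \<mu>) ^ 2)
      = real (card Z) * (\<Sum>z\<in>Z. n z ^ 2) - 2 * (real (card Z) * \<mu>) * (\<Sum>z\<in>Z. n z) + (real (card Z) * \<mu>) ^ 2"
    by algebra
  moreover have "real (card Z) * \<mu> = (\<Sum>z\<in>Z. n z)"
    using card by (simp add: \<mu>_def)
  ultimately show ?thesis by (simp add: \<mu>_def power2_eq_square)
qed simp

lemma sum_card_agreeing_pairs:
  assumes "finite C"
  shows "(\<Sum>T\<in>{T. T \<subseteq> {1..l} \<and> card T = m}. card (agreeing_pairs C T))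
       = (\<Sum>p\<in>C \<times> C. (l - hamming l (fst p) (snd p)) choose m)"
proof -
  define agree where "agree p = {j\<in>{1..l}. fst p j = snd p j}" for p :: "(nat \<Rightarrow> 'a) \<times> (nat \<Rightarrow> 'a)"
  have card_agree: "card (agree p) = l - hamming l (fst p) (snd p)" for p
  proof -
    have "card (agree p) = card ({1..l} - {j\<in>{1..l}. fst p j \<noteq> snd p j})"
      unfolding agree_def by (rule arg_cong[where f=card]) auto
    also have "\<dots> = card {1..l} - card {j\<in>{1..l}. fst p j \<noteq> snd p j}"
      by (rule card_Diff_subset) auto
    finally show ?thesis unfolding hamming_def by simp
  qed
  have "(\<Sum>T\<in>{T. T \<subseteq> {1..l} \<and> card T = m}. card (agreeing_pairs C T))
      = (\<Sum>T\<in>{T. T \<subseteq> {1..l} \<and> card T = m}. card {p\<in>C \<times> C. T \<subseteq> agree p})"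
    unfolding agreeing_pairs_def agree_def by (intro sum.cong refl arg_cong[where f=card]) auto
  also have "\<dots> = (\<Sum>p\<in>C \<times> C. card {T\<in>{T. T \<subseteq> {1..l} \<and> card T = m}. T \<subseteq> agree p})"
    using sum.swap_restrict[of "{T. T \<subseteq> {1..l} \<and> card T = m}" "C \<times> C" "\<lambda>_ _. 1::nat" "\<lambda>T p. T \<subseteq> agree p"]
    using assms by simp
  also have "\<dots> = (\<Sum>p\<in>C \<times> C. (l - hamming l (fst p) (snd p)) choose m)"
  proof (rule sum.cong[OF refl])
    fix p
    have "{T\<in>{T. T \<subseteq> {1..l} \<and> card T = m}. T \<subseteq> agree p} = {T. T \<subseteq> agree p \<and> card T = m}"
      unfolding agree_def by auto
    moreover have "finite (agree p)" unfolding agree_def by simp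
    ultimately show "card {T\<in>{T. T \<subseteq> {1..l} \<and> card T = m}. T \<subseteq> agree p} = (l - hamming l (fst p) (snd p)) choose m"
      using n_subsets[of "agree p" m] by (simp add: card_agree)
  qed
  finally show ?thesis .
qed

lemma agreeing_pairs_excess_eq_variance:
  assumes "finite S" "C \<subseteq> PiE {1..l} (\<lambda>_. S)" "T \<subseteq> {1..l}"
  shows "real (card S) ^ card T * real (card (agreeing_pairs C T)) - real (card C) ^ 2
       = real (card S) ^ card T * (\<Sum>w\<in>PiE T (\<lambda>_. S).
           (real (card (codewords_matching C T w)) - real (card C) / real (card S) ^ card T) ^ 2)"
proof -
  have "finite T" using assms(3) by (auto dest: finite_subset)
  then have "finite (PiE T (\<lambda>_. S))" "real (card (PiE T (\<lambda>_. S))) = real (card S) ^ card T"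
    using assms(1) by (simp_all add: card_PiE finite_PiE)
  then show ?thesis
    using card_mult_sum_squares_eq[of "PiE T (\<lambda>_. S)" "\<lambda>w. real (card (codewords_matching C T w))"]
      sum_card_codewords_matching[OF assms] card_agreeing_pairs[OF assms]
    by (simp flip: of_nat_sum of_nat_power)
qed

lemma sum_agreeing_pairs_excess_eq_0:
  assumes "finite C" "\<forall>k. 1 \<le> k \<and> k \<le> m \<longrightarrow> dual_distrib s l C k = 0"
  shows "(\<Sum>T\<in>{T. T \<subseteq> {1..l} \<and> card T = m}.
           real s ^ m * real (card (agreeing_pairs C T)) - real (card C) ^ 2) = 0"
proof -
  let ?Ts = "{T. T \<subseteq> {1..l} \<and> card T = m}"
  have "(\<Sum>T\<in>?Ts. real s ^ m * real (card (agreeing_pairs C T)) - real (card C) ^ 2)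
      = real s ^ m * real (\<Sum>T\<in>?Ts. card (agreeing_pairs C T)) - real (card ?Ts) * real (card C) ^ 2"
    by (simp add: sum_subtractf sum_distrib_left)
  also have "\<dots> = (\<Sum>p\<in>C \<times> C. real s ^ m * real ((l - hamming l (fst p) (snd p)) choose m))
      - real (l choose m) * real (card C) ^ 2"
    using sum_card_agreeing_pairs[OF assms(1), of l m] n_subsets[of "{1..l}" m]
    by (simp add: sum_distrib_left)
  also have "\<dots> = 0"
    using sum_pairs_choose_agreement[OF assms] by simp
  finally show ?thesis .
qed

lemma card_codewords_matching_of_dual_distrib_zero:
  assumes fS: "finite S" and "S \<noteq> {}" and C: "C \<subseteq> PiE {1..l} (\<lambda>_. S)"
    and dual: "\<forall>k. 1 \<le> k \<and> k \<le> m \<longrightarrow> dual_distrib (card S) l C k = 0"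
    and T: "T \<subseteq> {1..l}" "card T = m" and z: "\<forall>j\<in>T. z j \<in> S"
  shows "card (codewords_matching C T z) * card S ^ m = card C"
proof -
  define s where "s = card S"
  have s: "real s > 0" using assms(1,2) by (simp add: s_def card_gt_0_iff)
  have fC: "finite C" using C fS by (auto intro: finite_subset[OF _ finite_PiE])
  define Ts where "Ts = {T. T \<subseteq> {1..l} \<and> card T = m}"
  have fTs: "finite Ts" unfolding Ts_def by (rule finite_subset[of _ "Pow {1..l}"]) auto
  define \<mu> where "\<mu> = real (card C) / real s ^ m"
  define excess where
    "excess T' = real s ^ m * real (card (agreeing_pairs C T')) - real (card C) ^ 2" for T'
  have excess_eq: "excess T' = real s ^ m *
      (\<Sum>w\<in>PiE T' (\<lambda>_. S). (real (card (codewords_matching C T' w)) - \<mu>) ^ 2)"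
    if "T' \<in> Ts" for T'
    using that agreeing_pairs_excess_eq_variance[OF fS C, of T']
    unfolding Ts_def excess_def \<mu>_def s_def by simp
  have "excess T' \<ge> 0" if "T' \<in> Ts" for T'
    using excess_eq[OF that] s by (simp add: sum_nonneg)
  moreover have "(\<Sum>T'\<in>Ts. excess T') = 0"
    using sum_agreeing_pairs_excess_eq_0[OF fC dual] unfolding Ts_def excess_def s_def .
  moreover have "T \<in> Ts" using T by (simp add: Ts_def)
  ultimately have "excess T = 0"
    using sum_nonneg_eq_0_iff[OF fTs, of excess] by blast
  then have "(\<Sum>w\<in>PiE T (\<lambda>_. S). (real (card (codewords_matching C T w)) - \<mu>) ^ 2) = 0"
    using excess_eq[OF \<open>T \<in> Ts\<close>] s by simp
  moreover have "finite (PiE T (\<lambda>_. S))"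
    using fS T by (auto intro!: finite_PiE dest: finite_subset)
  ultimately have "\<forall>w\<in>PiE T (\<lambda>_. S). (real (card (codewords_matching C T w)) - \<mu>) ^ 2 = 0"
    by (subst (asm) sum_nonneg_eq_0_iff) auto
  moreover have "restrict z T \<in> PiE T (\<lambda>_. S)"
    using z by simp
  ultimately have "(real (card (codewords_matching C T (restrict z T))) - \<mu>) ^ 2 = 0"
    by (rule bspec)
  then have "real (card (codewords_matching C T z) * s ^ m) = real (card C)"
    using s by (simp add: \<mu>_def field_simps)
  then show ?thesis unfolding s_def by (simp only: of_nat_eq_iff)
qed

lemma orthogonal_array_of_dual_distrib_zero:
  assumes "finite S" "C \<subseteq> PiE {1..l} (\<lambda>_. S)"
    and "\<forall>k. 1 \<le> k \<and> k \<le> m \<longrightarrow> dual_distrib (card S) l C k = 0"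
  shows "orthogonal_array S l m C"
  unfolding orthogonal_array_def
proof (intro allI impI, elim conjE)
  fix T z assume T: "T \<subseteq> {1..l}" "card T \<le> m" and z: "\<forall>j\<in>T. z j \<in> S"
  show "card (codewords_matching C T z) * card S ^ card T = card C"
  proof (cases "T = {}")
    case False
    then have "S \<noteq> {}" using z by auto
    then show ?thesis
      using card_codewords_matching_of_dual_distrib_zero[OF assms(1) _ assms(2) _ T(1) refl z] assms(3) T(2)
      by simp
  qed (simp add: codewords_matching_def)
qed

section \<open>The query distribution\<close>

lemma pair_pmf_of_set:
  assumes "finite A" "A \<noteq> {}" "finite B" "B \<noteq> {}"
  shows "pair_pmf (pmf_of_set A) (pmf_of_set B) = pmf_of_set (A \<times> B)"
proof (rule pmf_eqI)
  fix x :: "'a \<times> 'b"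
  show "pmf (pair_pmf (pmf_of_set A) (pmf_of_set B)) x = pmf (pmf_of_set (A \<times> B)) x"
    using assms by (cases x) (simp add: pmf_pair card_cartesian_product indicator_def)
qed

lemma map_pmf_of_set_constant_fibres:
  assumes "finite A" "A \<noteq> {}" "finite B" "g ` A \<subseteq> B" "\<forall>b\<in>B. card {a\<in>A. g a = b} = k"
  shows "map_pmf g (pmf_of_set A) = pmf_of_set B"
proof -
  have "(\<Sum>b\<in>B. card {a\<in>A. g a = b}) = card A"
    using sum.group[OF assms(1,3,4), of "\<lambda>_. 1::nat"] by simp
  then have cA: "card A = card B * k"
    using assms(5) by simp
  then have "k > 0" "B \<noteq> {}" using assms(1,2) by (auto simp: card_gt_0_iff)
  show ?thesis
  proof (rule pmf_eqI)
    fix b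
    have "pmf (map_pmf g (pmf_of_set A)) b = card (A \<inter> g -` {b}) / card A"
      unfolding pmf_map using measure_pmf_of_set[OF assms(2,1)] by simp
    also have "\<dots> = pmf (pmf_of_set B) b"
    proof (cases "b \<in> B")
      case True
      have "A \<inter> g -` {b} = {a\<in>A. g a = b}" by auto
      then show ?thesis using True assms(3,5) cA \<open>k > 0\<close> \<open>B \<noteq> {}\<close> by simp
    next
      case False
      then have "A \<inter> g -` {b} = {}" using assms(4) by auto
      then show ?thesis using False assms(3) \<open>B \<noteq> {}\<close> by simp
    qed
    finally show "pmf (map_pmf g (pmf_of_set A)) b = pmf (pmf_of_set B) b" .
  qed
qed

definition query_tuple :: "nat \<Rightarrow> 'a \<times> nat \<Rightarrow> (nat \<Rightarrow> 'a) \<times> 'a \<Rightarrow> nat \<Rightarrow> 'a \<times> nat" where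
  "query_tuple l i = (\<lambda>(c, y) j. if j = snd i then (y, j) else if j \<in> {1..l} then (c j, j) else undefined)"

lemma blocks_through_eq_codewords_matching:
  "snd i \<in> {1..l} \<Longrightarrow> blocks_through C l i = codewords_matching C {snd i} (\<lambda>_. fst i)"
  by (cases i) (auto simp: blocks_through_def block_def codewords_matching_def)

lemma blocks_through_nonempty:
  assumes "orthogonal_array S l m C" "1 \<le> m" "i \<in> points S l" "finite C" "C \<noteq> {}"
  shows "blocks_through C l i \<noteq> {}"
proof -
  have "snd i \<in> {1..l}" "fst i \<in> S" using assms(3) by (auto simp: points_def)
  then have "card (blocks_through C l i) * card S = card C"
    using assms(1,2) unfolding orthogonal_array_def
    by (auto simp: blocks_through_eq_codewords_matching dest: spec[of _ "{snd i}"])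
  then show ?thesis using assms(4,5) by auto
qed

lemma query_eq_map_pmf_of_set:
  assumes "finite S" "S \<noteq> {}" "finite C" "blocks_through C l i \<noteq> {}"
  shows "query S C l i = map_pmf (query_tuple l i) (pmf_of_set (blocks_through C l i \<times> S))"
  using assms unfolding query_def query_tuple_def
  by (subst pair_pmf_of_set) (auto simp: blocks_through_def)

lemma query_restrict_fibre:
  assumes "i \<in> points S l" "T \<subseteq> {1..l}" "x \<in> PiE T (\<lambda>j. S \<times> {j})"
  shows "{a \<in> blocks_through C l i \<times> S. restrict (query_tuple l i a) T = x}
       = codewords_matching C (insert (snd i) T) (\<lambda>j. if j = snd i then fst i else fst (x j))
         \<times> {y \<in> S. snd i \<in> T \<longrightarrow> y = fst (x (snd i))}"
proof -
  have i: "snd i \<in> {1..l}" using assms(1) by (auto simp: points_def)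
  have snd_x: "snd (x j) = j" if "j \<in> T" for j
    using assms(3) that by (auto simp: PiE_iff)
  have query_tuple_T: "query_tuple l i (c, y) j = (if j = snd i then y else c j, j)" if "j \<in> T" for c y j
    using assms(2) that by (auto simp: query_tuple_def)
  have restr: "restrict (query_tuple l i (c, y)) T = x \<longleftrightarrow> (\<forall>j\<in>T. (if j = snd i then y else c j) = fst (x j))"
    for c y
    using assms(3) by (auto simp: restrict_def fun_eq_iff PiE_iff extensional_def prod_eq_iff query_tuple_T snd_x)
  have bt: "c \<in> blocks_through C l i \<longleftrightarrow> c \<in> C \<and> c (snd i) = fst i" for c
    using i by (cases i) (auto simp: blocks_through_def block_def)
  show ?thesis
  proof (rule set_eqI)
    fix a :: "(nat \<Rightarrow> 'a) \<times> 'a"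
    show "a \<in> {a \<in> blocks_through C l i \<times> S. restrict (query_tuple l i a) T = x} \<longleftrightarrow>
      a \<in> codewords_matching C (insert (snd i) T) (\<lambda>j. if j = snd i then fst i else fst (x j))
         \<times> {y \<in> S. snd i \<in> T \<longrightarrow> y = fst (x (snd i))}"
      by (cases a) (simp add: restr bt codewords_matching_def; blast)
  qed
qed

lemma card_query_restrict_fibre:
  assumes OA: "orthogonal_array S l (card T + 1) C" and i: "i \<in> points S l"
    and T: "T \<subseteq> {1..l}" and x: "x \<in> PiE T (\<lambda>j. S \<times> {j})"
  shows "card {a \<in> blocks_through C l i \<times> S. restrict (query_tuple l i a) T = x} * card S ^ card T = card C"
proof -
  define z where "z = (\<lambda>j. if j = snd i then fst i else fst (x j))"
  have "finite T" using T by (auto dest: finite_subset)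
  moreover have "snd i \<in> {1..l}" "fst i \<in> S" using i by (auto simp: points_def)
  moreover have "fst (x j) \<in> S" if "j \<in> T" for j using x that by (auto simp: PiE_iff)
  ultimately have "insert (snd i) T \<subseteq> {1..l} \<and> card (insert (snd i) T) \<le> card T + 1
      \<and> (\<forall>j\<in>insert (snd i) T. z j \<in> S)"
    using T by (simp add: z_def card_insert_if)
  then have matching: "card (codewords_matching C (insert (snd i) T) z) * card S ^ card (insert (snd i) T) = card C"
    using OA unfolding orthogonal_array_def by blast
  have "{y \<in> S. snd i \<in> T \<longrightarrow> y = fst (x (snd i))} = (if snd i \<in> T then {fst (x (snd i))} else S)"
    using \<open>\<And>j. j \<in> T \<Longrightarrow> fst (x j) \<in> S\<close> by auto
  then show ?thesis
    using matching \<open>finite T\<close> unfolding query_restrict_fibre[OF i T x] z_def[symmetric]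
    by (cases "snd i \<in> T") (simp_all add: card_cartesian_product insert_absorb)
qed

lemma query_restrict_uniform:
  assumes fS: "finite S" and C: "C \<subseteq> PiE {1..l} (\<lambda>_. S)" and "C \<noteq> {}"
    and OA: "orthogonal_array S l (card T + 1) C" and i: "i \<in> points S l" and T: "T \<subseteq> {1..l}"
  shows "map_pmf (\<lambda>Q. restrict Q T) (query S C l i) = pmf_of_set (PiE T (\<lambda>j. S \<times> {j}))"
proof -
  have "finite C" using C fS by (auto intro: finite_subset[OF _ finite_PiE])
  have "S \<noteq> {}" using i by (auto simp: points_def)
  have "blocks_through C l i \<noteq> {}"
    using blocks_through_nonempty[OF OA _ i \<open>finite C\<close> \<open>C \<noteq> {}\<close>] by simp
  have "map_pmf (\<lambda>Q. restrict Q T) (query S C l i)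
      = map_pmf (\<lambda>a. restrict (query_tuple l i a) T) (pmf_of_set (blocks_through C l i \<times> S))"
    using query_eq_map_pmf_of_set[OF fS \<open>S \<noteq> {}\<close> \<open>finite C\<close> \<open>blocks_through C l i \<noteq> {}\<close>]
    by (simp add: pmf.map_comp o_def)
  also have "\<dots> = pmf_of_set (PiE T (\<lambda>j. S \<times> {j}))"
  proof (rule map_pmf_of_set_constant_fibres)
    show "(\<lambda>a. restrict (query_tuple l i a) T) ` (blocks_through C l i \<times> S) \<subseteq> PiE T (\<lambda>j. S \<times> {j})"
    proof clarify
      fix c y assume "c \<in> blocks_through C l i" "y \<in> S"
      then have "c \<in> PiE {1..l} (\<lambda>_. S)" using C by (auto simp: blocks_through_def)
      then show "restrict (query_tuple l i (c, y)) T \<in> PiE T (\<lambda>j. S \<times> {j})"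
        using T \<open>y \<in> S\<close> by (auto simp: query_tuple_def PiE_iff)
    qed
    show "\<forall>x\<in>PiE T (\<lambda>j. S \<times> {j}). card {a \<in> blocks_through C l i \<times> S. restrict (query_tuple l i a) T = x}
        = card C div card S ^ card T"
    proof
      fix x assume x: "x \<in> PiE T (\<lambda>j. S \<times> {j})"
      have "card S ^ card T \<noteq> 0" using fS \<open>S \<noteq> {}\<close> by simp
      then show "card {a \<in> blocks_through C l i \<times> S. restrict (query_tuple l i a) T = x}
          = card C div card S ^ card T"
        by (simp flip: card_query_restrict_fibre[OF OA i T x])
    qed
    show "finite (PiE T (\<lambda>j. S \<times> {j}))"
      using fS T by (auto intro!: finite_PiE dest: finite_subset)
  qed (use \<open>finite C\<close> fS \<open>blocks_through C l i \<noteq> {}\<close> \<open>S \<noteq> {}\<close> in \<open>auto simp: blocks_through_def\<close>)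
  finally show ?thesis .
qed

lemma set_pmf_query:
  assumes "finite S" "S \<noteq> {}" "finite C" "blocks_through C l i \<noteq> {}"
  shows "set_pmf (query S C l i) = query_tuple l i ` (blocks_through C l i \<times> S)"
  using assms by (simp add: query_eq_map_pmf_of_set blocks_through_def)

lemma IC_eq_neg_sum_query_tuple:
  assumes "u \<in> IC C l S" "c \<in> blocks_through C l i" "snd i \<in> {1..l}"
  shows "u i = - (\<Sum>j \<in> {1..l} - {snd i}. u (query_tuple l i (c, y) j))"
proof -
  have c: "c \<in> C" "c (snd i) = fst i"
    using assms(2,3) by (cases i; auto simp: blocks_through_def block_def)+
  have "block l c = (\<lambda>j. (c j, j)) ` {1..l}"
    unfolding block_def by auto
  then have "(\<Sum>x\<in>block l c. u x) = (\<Sum>j\<in>{1..l}. u (c j, j))"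
    by (simp add: sum.reindex inj_on_def)
  then have "0 = (\<Sum>j\<in>{1..l}. u (c j, j))"
    using assms(1) c(1) unfolding IC_def by simp
  also have "\<dots> = u i + (\<Sum>j\<in>{1..l} - {snd i}. u (query_tuple l i (c, y) j))"
    using assms(3) c(2) by (simp add: sum.remove query_tuple_def)
  finally show ?thesis by (simp add: eq_neg_iff_add_eq_0)
qed

theorem mainTheorem18:
  fixes S :: "'a set" and C0 :: "(nat \<Rightarrow> 'a) set" and l t :: nat
  assumes "finite S"
    and "1 \<le> t"
    and "C0 \<subseteq> PiE {1..l} (\<lambda>_. S)"
    and "has_dual_distance (card S) l C0 (t + 2)"
    and "t + 2 \<le> l"
  shows "(\<forall>T i i'. T \<subseteq> {1..l} \<and> card T \<le> t \<and> i \<in> points S l \<and> i' \<in> points S l \<longrightarrow>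
            map_pmf (\<lambda>Q. restrict Q T) (query S C0 l i) =
            map_pmf (\<lambda>Q. restrict Q T) (query S C0 l i'))
       \<and> (\<forall>(u :: 'a \<times> nat \<Rightarrow> 'f::{finite, field}) \<in> IC C0 l S. \<forall>i \<in> points S l.
            \<forall>Q \<in> set_pmf (query S C0 l i).
              u i = - (\<Sum>j \<in> {1..l} - {snd i}. u (Q j)))"
proof -
  note fS = assms(1) and C = assms(3)
  have dual: "dual_distrib (card S) l C0 (t + 2) \<noteq> 0"
    "\<And>k. 1 \<le> k \<Longrightarrow> k \<le> t + 1 \<Longrightarrow> dual_distrib (card S) l C0 k = 0"
    using assms(4) by (auto simp: has_dual_distance_def)
  then have "C0 \<noteq> {}" by (auto simp: dual_distrib_def)
  have "finite C0" using C fS by (auto intro: finite_subset[OF _ finite_PiE])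
  have OA: "orthogonal_array S l m C0" if "m \<le> t + 1" for m
    using orthogonal_array_of_dual_distrib_zero[OF fS C] dual(2) that by simp
  have blocks: "blocks_through C0 l i \<noteq> {}" if "i \<in> points S l" for i
    using blocks_through_nonempty[OF OA[OF order.refl] _ that \<open>finite C0\<close> \<open>C0 \<noteq> {}\<close>] by simp
  show ?thesis
  proof (intro conjI allI impI ballI)
    fix T i i' assume "T \<subseteq> {1..l} \<and> card T \<le> t \<and> i \<in> points S l \<and> i' \<in> points S l"
    then show "map_pmf (\<lambda>Q. restrict Q T) (query S C0 l i) = map_pmf (\<lambda>Q. restrict Q T) (query S C0 l i')"
      using query_restrict_uniform[OF fS C \<open>C0 \<noteq> {}\<close> OA] by simp
  next
    fix u :: "'a \<times> nat \<Rightarrow> 'f" and i Q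
    assume u: "u \<in> IC C0 l S" and i: "i \<in> points S l" and "Q \<in> set_pmf (query S C0 l i)"
    moreover have "S \<noteq> {}" "snd i \<in> {1..l}" using i by (auto simp: points_def)
    ultimately obtain c y where "c \<in> blocks_through C0 l i" "Q = query_tuple l i (c, y)"
      using set_pmf_query[OF fS _ \<open>finite C0\<close> blocks[OF i]] by auto
    then show "u i = - (\<Sum>j \<in> {1..l} - {snd i}. u (Q j))"
      using IC_eq_neg_sum_query_tuple[OF u] \<open>snd i \<in> {1..l}\<close> by simp
  qed
qed

end
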